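(* Let $v,w\in\mathbb{R}^n$ be such that $v$ has at least one positive entry and at least one negative entry, and $w\neq 0$. Then there exists an invertible matrix $B\in\mathbb{R}^{n\times n}$ with $B\geq 0$ (entrywise) such that $Bv=w$.
   Context: For a matrix or vector, $\geq 0$ means all entries are nonnegative. *)

theory Defs
  imports "HOL-Analysis.Analysis"
begin

end

theory Submission
  imports Defs
begin

text \<open>
  Pick coordinates p, q with v$p > 0 > v$q. Every real number is a nonnegative combination
  of v$p and v$q, so every row other than p, q can be taken to be a unit row plus nonnegative
  entries in columns p and q that correct its value. Rows p and q form a 2x2 nonnegative block
  on columns p, q, and adding multiples of the positive kernel vector (-v$q, v$p) to its rows
  makes the block nonsingular as soon as w$p or w$q is nonzero; the resulting matrix is then
  invertible because rows p and q involve only columns p and q. If w vanishes at p and q,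
  apply this to a permutation of w and permute the rows back.
\<close>

lemma nonneg_combination_of_opposite_signs:
  fixes P Q c :: real
  assumes "P > 0" "Q < 0"
  obtains a b where "a \<ge> 0" "b \<ge> 0" "a * P + b * Q = c"
proof (cases "c \<ge> 0")
  case True
  with assms show ?thesis by (intro that[of "c / P" 0]) auto
next
  case False
  with assms show ?thesis by (intro that[of 0 "c / Q"]) (auto simp: divide_nonpos_neg)
qed

lemma nonsingular_nonneg_2x2_solution:
  fixes P Q w1 w2 :: real
  assumes P: "P > 0" and Q: "Q < 0" and w: "w1 \<noteq> 0 \<or> w2 \<noteq> 0"
  obtains \<alpha> \<beta> \<gamma> \<delta> where "\<alpha> \<ge> 0" "\<beta> \<ge> 0" "\<gamma> \<ge> 0" "\<delta> \<ge> 0"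
    "\<alpha> * P + \<beta> * Q = w1" "\<gamma> * P + \<delta> * Q = w2" "\<alpha> * \<delta> - \<beta> * \<gamma> \<noteq> 0"
proof -
  obtain a b where ab: "a \<ge> 0" "b \<ge> 0" "a * P + b * Q = w1"
    using nonneg_combination_of_opposite_signs[OF P Q] .
  obtain c d where cd: "c \<ge> 0" "d \<ge> 0" "c * P + d * Q = w2"
    using nonneg_combination_of_opposite_signs[OF P Q] .
  have shift_row1: "(a - Q) * P + (b + P) * Q = w1" and shift_row2: "(c - Q) * P + (d + P) * Q = w2"
    using ab(3) cd(3) by (simp_all add: algebra_simps)
  have det_shift1: "(a - Q) * d - (b + P) * c = (a * d - b * c) - w2"
   and det_shift2: "a * (d + P) - b * (c - Q) = (a * d - b * c) + w1"
    by (simp_all add: ab(3)[symmetric] cd(3)[symmetric] algebra_simps)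
  consider "a * d - b * c \<noteq> 0" | "a * d - b * c = 0" "w1 \<noteq> 0" | "a * d - b * c = 0" "w2 \<noteq> 0"
    using w by blast
  then show ?thesis
  proof cases
    case 1
    with ab cd show ?thesis by (intro that) auto
  next
    case 2
    with ab cd P Q shift_row2 det_shift2 show ?thesis by (intro that[of a b "c - Q" "d + P"]) auto
  next
    case 3
    with ab cd P Q shift_row1 det_shift1 show ?thesis by (intro that[of "a - Q" "b + P" c d]) auto
  qed
qed

lemma invertible_if_kernel_trivial:
  fixes A :: "'a::field ^ 'n ^ 'n"
  assumes "\<And>x. A *v x = 0 \<Longrightarrow> x = 0"
  shows "invertible A"
  using assms invertible_left_inverse matrix_left_invertible_ker by blast

lemma nonneg_invertible_solution_pivot:
  fixes v w :: "real ^ 'n"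
  assumes vp: "v $ p > 0" and vq: "v $ q < 0" and w: "w $ p \<noteq> 0 \<or> w $ q \<noteq> 0"
  obtains B :: "real ^ 'n ^ 'n" where "invertible B" "\<forall>i j. B $ i $ j \<ge> 0" "B *v v = w"
proof -
  have "p \<noteq> q" using vp vq by auto
  have "\<forall>i. \<exists>a b. a \<ge> 0 \<and> b \<ge> 0 \<and> a * v$p + b * v$q = w$i - v$i"
    using nonneg_combination_of_opposite_signs[OF vp vq] by metis
  then obtain a b where ab: "\<And>i. a i \<ge> 0" "\<And>i. b i \<ge> 0" "\<And>i. a i * v$p + b i * v$q = w$i - v$i"
    by metis
  obtain \<alpha> \<beta> \<gamma> \<delta> where block: "\<alpha> \<ge> 0" "\<beta> \<ge> 0" "\<gamma> \<ge> 0" "\<delta> \<ge> 0"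
    "\<alpha> * v$p + \<beta> * v$q = w$p" "\<gamma> * v$p + \<delta> * v$q = w$q" and det: "\<alpha> * \<delta> - \<beta> * \<gamma> \<noteq> 0"
    using nonsingular_nonneg_2x2_solution[OF vp vq w] .
  define B :: "real ^ 'n ^ 'n" where "B = (\<chi> i j.
      if i = p then (if j = p then \<alpha> else 0) + (if j = q then \<beta> else 0)
      else if i = q then (if j = p then \<gamma> else 0) + (if j = q then \<delta> else 0)
      else (if j = i then 1 else 0) + (if j = p then a i else 0) + (if j = q then b i else 0))"
  have B_mult: "(B *v x) $ i =
      (if i = p then \<alpha> * x$p + \<beta> * x$q else if i = q then \<gamma> * x$p + \<delta> * x$q
       else x$i + a i * x$p + b i * x$q)" for x i
    using \<open>p \<noteq> q\<close>
    by (simp add: matrix_vector_mult_def B_def distrib_right sum.distrib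
        if_distrib[of "\<lambda>y. y * _"] cong: if_cong)
  have "invertible B"
  proof (rule invertible_if_kernel_trivial)
    fix x assume x: "B *v x = 0"
    have rows: "\<alpha> * x$p + \<beta> * x$q = 0" "\<gamma> * x$p + \<delta> * x$q = 0"
      using x B_mult[of x p] B_mult[of x q] \<open>p \<noteq> q\<close> by (simp_all add: vec_eq_iff)
    have "(\<alpha> * \<delta> - \<beta> * \<gamma>) * x$p = 0" "(\<alpha> * \<delta> - \<beta> * \<gamma>) * x$q = 0"
      using rows by algebra+
    with det have "x$p = 0" "x$q = 0" by simp_all
    with x show "x = 0"
      by (auto simp: vec_eq_iff B_mult split: if_splits)
  qed
  moreover have "\<forall>i j. B $ i $ j \<ge> 0"
    using block ab by (auto simp: B_def)
  moreover have "B *v v = w"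
    using block ab by (auto simp: vec_eq_iff B_mult algebra_simps)
  ultimately show ?thesis by (rule that)
qed

lemma matrix_vector_mult_permute_rows:
  "(\<chi> i. A $ \<sigma> i) *v x = (\<chi> i. (A *v x) $ \<sigma> i)"
  by (simp add: matrix_vector_mult_def vec_eq_iff)

lemma invertible_permute_rows:
  fixes A :: "'a::field ^ 'n ^ 'n" and \<sigma> :: "'n \<Rightarrow> 'n"
  assumes A: "invertible A" and \<sigma>: "surj \<sigma>"
  shows "invertible (\<chi> i. A $ \<sigma> i)"
proof (rule invertible_if_kernel_trivial)
  fix x assume "(\<chi> i. A $ \<sigma> i) *v x = 0"
  then have "(A *v x) $ \<sigma> i = 0" for i
    by (simp add: matrix_vector_mult_permute_rows vec_eq_iff)
  with \<sigma> have "A *v x = A *v 0"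
    by (metis matrix_vector_mult_0_right surjD vec_eq_iff zero_index)
  with inj_matrix_vector_mult[OF A] show "x = 0" by (rule injD)
qed

theorem mainTheorem2:
  fixes v w :: "real ^ 'n"
  assumes "\<exists>i. v $ i > 0"
    and "\<exists>j. v $ j < 0"
    and "w \<noteq> 0"
  shows "\<exists>B :: real ^ 'n ^ 'n. invertible B \<and> (\<forall>i j. B $ i $ j \<ge> 0) \<and> B *v v = w"
proof -
  obtain p q where vp: "v $ p > 0" and vq: "v $ q < 0" using assms(1,2) by blast
  obtain k where "w $ k \<noteq> 0" using assms(3) by (auto simp: vec_eq_iff)
  define \<sigma> where "\<sigma> = Transposition.transpose p k"
  have \<sigma>: "surj \<sigma>" "\<sigma> (\<sigma> i) = i" for i
    by (simp_all add: \<sigma>_def bij_is_surj)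
  have "(\<chi> i. w $ \<sigma> i) $ p \<noteq> 0"
    using \<open>w $ k \<noteq> 0\<close> by (simp add: \<sigma>_def)
  then obtain B where B: "invertible B" "\<forall>i j. B $ i $ j \<ge> 0" "B *v v = (\<chi> i. w $ \<sigma> i)"
    using nonneg_invertible_solution_pivot[OF vp vq] by blast
  have "invertible (\<chi> i. B $ \<sigma> i)"
    using invertible_permute_rows[OF B(1) \<sigma>(1)] .
  moreover have "\<forall>i j. (\<chi> i. B $ \<sigma> i) $ i $ j \<ge> 0"
    using B(2) by simp
  moreover have "(\<chi> i. B $ \<sigma> i) *v v = w"
    by (simp add: matrix_vector_mult_permute_rows B(3) \<sigma>(2) vec_eq_iff)
  ultimately show ?thesis by blast
qed

end
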